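(* Let $s\in\{0,\tfrac12\}$, $\lambda\in\mathbb{C}$ and $\sigma\in\mathrm{Aut}(\mathfrak{L}^s_\lambda)$. Then $\sigma(H_p)\in\mathbf{H}:=\mathrm{span}_{\mathbb{C}}\{H_q:q\in s+\mathbb{Z}\}$ for every $p\in s+\mathbb{Z}$.
   Context: For $s\in\{0,\tfrac12\}$ and $\lambda\in\mathbb{C}$, $\mathfrak{L}^s_\lambda$ is the complex Lie superalgebra with basis $\{L_m,I_m,G_p,H_p : m\in\mathbb{Z},\ p\in s+\mathbb{Z}\}$, even part spanned by the $L_m,I_m$, odd part spanned by the $G_p,H_p$, with brackets $[L_m,L_n]=(m-n)L_{m+n}$, $[L_m,I_n]=(m-n)I_{m+n}$, $[L_m,H_p]=(\tfrac m2-p)H_{m+p}$, $[L_m,G_p]=(\tfrac m2-p)G_{m+p}+\lambda(m+1)H_{m+p}$, $[I_m,G_p]=(m-2p)H_{m+p}$, $[G_p,G_q]=I_{p+q}$, plus super-antisymmetry; all other brackets of basis elements are zero. $\mathrm{Aut}(\mathfrak{L})$ is the group of bijective parity-preserving linear maps $\sigma$ with $\sigma([x,y])=[\sigma(x),\sigma(y)]$. *)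

theory Defs
  imports Complex_Main
begin

text \<open>The parameter s is encoded by a boolean
  half (s = 1/2 iff half).  L m and I m stand for L_m, I_m (m integer); G k and H k stand
  for G_p, H_p with p = k + s (k integer).\<close>

datatype basis = L int | I int | G int | H int

definition sval :: "bool \<Rightarrow> complex" where
  "sval half = (if half then 1/2 else 0)"

definition pidx :: "bool \<Rightarrow> int \<Rightarrow> complex" where
  "pidx half k = of_int k + sval half"

definition ev :: "basis \<Rightarrow> basis \<Rightarrow> complex" where
  "ev a = (\<lambda>b. if b = a then 1 else 0)"

definition Lvec :: "(basis \<Rightarrow> complex) set" where
  "Lvec = {x. finite {a. x a \<noteq> 0}}"

fun is_even :: "basis \<Rightarrow> bool" where
  "is_even (L _) = True" | "is_even (I _) = True" | "is_even (G _) = False" | "is_even (H _) = False"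

definition even_part :: "(basis \<Rightarrow> complex) set" where
  "even_part = {x \<in> Lvec. \<forall>a. x a \<noteq> 0 \<longrightarrow> is_even a}"

definition odd_part :: "(basis \<Rightarrow> complex) set" where
  "odd_part = {x \<in> Lvec. \<forall>a. x a \<noteq> 0 \<longrightarrow> \<not> is_even a}"

text \<open>Bracket of basis elements (all brackets, including those obtained by super-antisymmetry).\<close>
fun brb :: "bool \<Rightarrow> complex \<Rightarrow> basis \<Rightarrow> basis \<Rightarrow> basis \<Rightarrow> complex" where
  "brb half lam (L m) (L n) = (\<lambda>c. of_int (m - n) * ev (L (m + n)) c)"
| "brb half lam (L m) (I n) = (\<lambda>c. of_int (m - n) * ev (I (m + n)) c)"
| "brb half lam (I n) (L m) = (\<lambda>c. - of_int (m - n) * ev (I (m + n)) c)"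
| "brb half lam (L m) (H k) = (\<lambda>c. (of_int m / 2 - pidx half k) * ev (H (m + k)) c)"
| "brb half lam (H k) (L m) = (\<lambda>c. - (of_int m / 2 - pidx half k) * ev (H (m + k)) c)"
| "brb half lam (L m) (G k) = (\<lambda>c. (of_int m / 2 - pidx half k) * ev (G (m + k)) c
                                    + lam * of_int (m + 1) * ev (H (m + k)) c)"
| "brb half lam (G k) (L m) = (\<lambda>c. - ((of_int m / 2 - pidx half k) * ev (G (m + k)) c
                                    + lam * of_int (m + 1) * ev (H (m + k)) c))"
| "brb half lam (I m) (G k) = (\<lambda>c. (of_int m - 2 * pidx half k) * ev (H (m + k)) c)"
| "brb half lam (G k) (I m) = (\<lambda>c. - (of_int m - 2 * pidx half k) * ev (H (m + k)) c)"
| "brb half lam (G k) (G l) = ev (I (k + l + (if half then 1 else 0)))"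
| "brb half lam _ _ = (\<lambda>c. 0)"

definition br :: "bool \<Rightarrow> complex \<Rightarrow> (basis \<Rightarrow> complex) \<Rightarrow> (basis \<Rightarrow> complex) \<Rightarrow> basis \<Rightarrow> complex" where
  "br half lam x y = (\<lambda>c. \<Sum>a\<in>{a. x a \<noteq> 0}. \<Sum>b\<in>{b. y b \<noteq> 0}. x a * y b * brb half lam a b c)"

definition is_aut :: "bool \<Rightarrow> complex \<Rightarrow> ((basis \<Rightarrow> complex) \<Rightarrow> (basis \<Rightarrow> complex)) \<Rightarrow> bool" where
  "is_aut half lam \<sigma> \<longleftrightarrow>
     bij_betw \<sigma> Lvec Lvec
   \<and> (\<forall>x\<in>Lvec. \<forall>y\<in>Lvec. \<sigma> (\<lambda>b. x b + y b) = (\<lambda>b. \<sigma> x b + \<sigma> y b))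
   \<and> (\<forall>c. \<forall>x\<in>Lvec. \<sigma> (\<lambda>b. c * x b) = (\<lambda>b. c * \<sigma> x b))
   \<and> \<sigma> ` even_part \<subseteq> even_part
   \<and> \<sigma> ` odd_part \<subseteq> odd_part
   \<and> (\<forall>x\<in>Lvec. \<forall>y\<in>Lvec. \<sigma> (br half lam x y) = br half lam (\<sigma> x) (\<sigma> y))"

definition Hspan :: "(basis \<Rightarrow> complex) set" where
  "Hspan = {x. \<exists>F c. finite F \<and> x = (\<lambda>b. \<Sum>k\<in>F. c k * ev (H k) b)}"

end

theory Submission
  imports Defs
begin

text \<open>Let \<open>x = \<sigma>(H_k)\<close>; it is odd, so it suffices to show that its \<open>G\<close>-coefficients vanish.
  Write \<open>G_0 = \<sigma>(z)\<close>. Brackets with \<open>H_k\<close> are combinations of \<open>H\<close>'s, hence odd, so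
  \<open>[x, G_0] = \<sigma>([H_k, z])\<close> is odd as well. But the coefficient of \<open>I_p\<close> in
  \<open>[x, G_0]\<close> is the coefficient of \<open>G_p\<close> in \<open>x\<close>, since \<open>[G_p, G_0] = I_p\<close> is the only
  bracket with \<open>G_0\<close> that produces an \<open>I\<close>.\<close>

fun basis_index :: "basis \<Rightarrow> int" where
  "basis_index (L m) = m" | "basis_index (I m) = m"
| "basis_index (G m) = m" | "basis_index (H m) = m"

lemma ev_Lvec: "ev a \<in> Lvec"
  by (simp add: Lvec_def ev_def)

lemma support_ev: "{b. ev a b \<noteq> 0} = {a}"
  by (auto simp: ev_def)

lemma ev_H_odd_part: "ev (H k) \<in> odd_part"
  using ev_Lvec[of "H k"] by (simp add: odd_part_def ev_def)

lemma brb_support: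
  assumes "brb half lam a b c \<noteq> 0"
  defines "n \<equiv> basis_index a + basis_index b"
  shows "c \<in> {L n, I n, I (n + 1), G n, H n}"
  using assms by (cases a; cases b) (auto simp: ev_def ac_simps split: if_splits)

lemma br_nonzero_obtains_brb:
  assumes "br half lam x y c \<noteq> 0"
  obtains a b where "x a \<noteq> 0" "y b \<noteq> 0" "brb half lam a b c \<noteq> 0"
proof -
  have "(\<Sum>a\<in>{a. x a \<noteq> 0}. \<Sum>b\<in>{b. y b \<noteq> 0}. x a * y b * brb half lam a b c) \<noteq> 0"
    using assms by (simp add: br_def)
  then obtain a where a: "a \<in> {a. x a \<noteq> 0}"
    "(\<Sum>b\<in>{b. y b \<noteq> 0}. x a * y b * brb half lam a b c) \<noteq> 0"
    by (meson sum.neutral)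
  then obtain b where "b \<in> {b. y b \<noteq> 0}" "x a * y b * brb half lam a b c \<noteq> 0"
    by (meson sum.neutral)
  with a show thesis using that by simp
qed

lemma br_Lvec:
  assumes "x \<in> Lvec" "y \<in> Lvec"
  shows "br half lam x y \<in> Lvec"
proof -
  let ?Sx = "{a. x a \<noteq> 0}" and ?Sy = "{b. y b \<noteq> 0}"
  let ?targets = "\<lambda>n. {L n, I n, I (n + 1), G n, H n}"
  have "{c. br half lam x y c \<noteq> 0}
          \<subseteq> (\<Union>a\<in>?Sx. \<Union>b\<in>?Sy. ?targets (basis_index a + basis_index b))"
    by (auto elim!: br_nonzero_obtains_brb dest!: brb_support)
  moreover have "finite ?Sx" "finite ?Sy"
    using assms by (auto simp: Lvec_def)
  ultimately show ?thesis
    unfolding Lvec_def by (auto intro: finite_subset)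
qed

lemma br_H_odd_part:
  assumes "z \<in> Lvec"
  shows "br half lam (ev (H k)) z \<in> odd_part"
proof -
  have "\<not> is_even c" if "br half lam (ev (H k)) z c \<noteq> 0" for c
  proof -
    from that obtain a b where "ev (H k) a \<noteq> 0" "brb half lam a b c \<noteq> 0"
      by (rule br_nonzero_obtains_brb)
    then have "brb half lam (H k) b c \<noteq> 0"
      by (simp add: ev_def split: if_splits)
    then show ?thesis
      by (cases b; cases c) (auto simp: ev_def split: if_splits)
  qed
  with br_Lvec[OF ev_Lvec assms] show ?thesis
    by (simp add: odd_part_def)
qed

lemma br_G0_coeff_I:
  assumes "x \<in> Lvec"
  shows "br half lam x (ev (G 0)) (I j) = x (G (j - (if half then 1 else 0)))"
proof -
  let ?p = "G (j - (if half then 1 else 0))"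
  have "br half lam x (ev (G 0)) (I j) = (\<Sum>a\<in>{a. x a \<noteq> 0}. x a * brb half lam a (G 0) (I j))"
    unfolding br_def support_ev by (simp add: ev_def)
  also have "\<dots> = (\<Sum>a\<in>{a. x a \<noteq> 0}. if a = ?p then x a else 0)"
  proof (rule sum.cong[OF refl])
    fix a
    show "x a * brb half lam a (G 0) (I j) = (if a = ?p then x a else 0)"
      by (cases a) (auto simp: ev_def)
  qed
  also have "\<dots> = x ?p"
    using assms by (simp add: Lvec_def sum.delta)
  finally show ?thesis .
qed

lemma G_coeff_zero_if_br_G0_odd:
  assumes "x \<in> Lvec" "br half lam x (ev (G 0)) \<in> odd_part"
  shows "x (G p) = 0"
proof -
  have "br half lam x (ev (G 0)) (I (p + (if half then 1 else 0))) = 0"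
    using assms(2) by (auto simp: odd_part_def)
  then show ?thesis
    using br_G0_coeff_I[OF assms(1)] by simp
qed

lemma odd_part_Hspan:
  assumes odd: "x \<in> odd_part" and no_G: "\<And>p. x (G p) = 0"
  shows "x \<in> Hspan"
proof -
  define F where "F = {j. x (H j) \<noteq> 0}"
  have "finite {a. x a \<noteq> 0}"
    using odd by (simp add: odd_part_def Lvec_def)
  then have "finite F"
    using finite_vimageI[of "{a. x a \<noteq> 0}" H] unfolding F_def vimage_def by (simp add: inj_def)
  have even_zero: "x b = 0" if "is_even b" for b
    using odd that by (auto simp: odd_part_def)
  have "x = (\<lambda>b. \<Sum>j\<in>F. x (H j) * ev (H j) b)"
  proof
    fix b
    show "x b = (\<Sum>j\<in>F. x (H j) * ev (H j) b)"
    proof (cases b)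
      case (H m)
      have "(\<Sum>j\<in>F. x (H j) * ev (H j) b) = (\<Sum>j\<in>F. if j = m then x (H j) else 0)"
        by (rule sum.cong) (auto simp: ev_def H)
      also have "\<dots> = x b"
        using \<open>finite F\<close> by (simp add: H F_def)
      finally show ?thesis by simp
    qed (simp_all add: ev_def no_G even_zero)
  qed
  with \<open>finite F\<close> show ?thesis
    unfolding Hspan_def by (intro CollectI exI[of _ F] exI[of _ "\<lambda>j. x (H j)"]) simp
qed

theorem lemma3p3:
  fixes half :: bool and lam :: complex
    and \<sigma> :: "(basis \<Rightarrow> complex) \<Rightarrow> (basis \<Rightarrow> complex)"
  assumes "is_aut half lam \<sigma>"
  shows "\<forall>k::int. \<sigma> (ev (H k)) \<in> Hspan"
proof
  fix k :: int
  have bij: "bij_betw \<sigma> Lvec Lvec"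
    and odd: "\<And>v. v \<in> odd_part \<Longrightarrow> \<sigma> v \<in> odd_part"
    and hom: "\<And>u v. u \<in> Lvec \<Longrightarrow> v \<in> Lvec \<Longrightarrow> \<sigma> (br half lam u v) = br half lam (\<sigma> u) (\<sigma> v)"
    using assms unfolding is_aut_def by blast+
  let ?x = "\<sigma> (ev (H k))"
  have x_odd: "?x \<in> odd_part"
    by (rule odd[OF ev_H_odd_part])
  have "ev (G 0) \<in> \<sigma> ` Lvec"
    using bij ev_Lvec[of "G 0"] by (simp add: bij_betw_def)
  then obtain z where z: "z \<in> Lvec" "\<sigma> z = ev (G 0)"
    by auto
  have "br half lam ?x (ev (G 0)) = \<sigma> (br half lam (ev (H k)) z)"
    using hom[OF ev_Lvec z(1)] z(2) by simp
  also have "\<dots> \<in> odd_part"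
    by (rule odd[OF br_H_odd_part[OF z(1)]])
  finally have "\<And>p. ?x (G p) = 0"
    using x_odd by (intro G_coeff_zero_if_br_G0_odd) (auto simp: odd_part_def)
  with x_odd show "?x \<in> Hspan"
    by (rule odd_part_Hspan)
qed

end
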